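(* Suppose there exists $\alpha>0$ such that $G_{ii}=\alpha$ for all $i\in\{1,\dots,p\}$. Then the function $F(u):=p\log\big(\sum_{i=1}^pe^{(Bu)_i}G_{ii}\big)-\sum_{i=1}^p(Bu)_i$ on $\mathbb{R}^H$ admits $u=0$ as its unique minimizer; consequently the associated rescaling matrix $\mathrm{diag}(\exp(Bu))$ is the identity.
   Context: $\mathcal G=(V,E)$ is a finite DAG; input neurons have no incoming edges, output neurons no outgoing edges, hidden neurons $\mathcal H$ ($H=|\mathcal H|$) are the rest. $\theta\in\mathbb{R}^p$ consists of one weight per edge and one bias $b_v$ per non-input neuron $v$. For $h\in\mathcal H$, $\mathrm{in}_h$ = indices of $b_h$ and of weights of edges entering $h$, $\mathrm{out}_h$ = indices of weights of edges leaving $h$. $B\in\mathbb{R}^{p\times H}$ has $B_{ih}=-1$ if $i\in\mathrm{in}_h$, $1$ if $i\in\mathrm{out}_h$, $0$ otherwise. $G=\partial\Phi(\theta)^\top\partial\Phi(\theta)$ where $\Phi:\mathbb{R}^p\to\mathbb{R}^q$ is the path-lifting: for each path $v_0\to\cdots\to v_d$ along edges ending at an output neuron (for $d=0$, $v_0$ non-input), the coordinate is the product of the weights along the path, times $b_{v_0}$ if $v_0$ is not an input neuron. *)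

theory Defs
  imports "HOL-Analysis.Analysis"
begin

datatype 'v param = W "'v \<times> 'v" | Bias 'v

definition dag_network :: "'v set \<Rightarrow> ('v \<times> 'v) set \<Rightarrow> 'v set \<Rightarrow> 'v set \<Rightarrow> bool" where
  "dag_network V E Inp Out \<longleftrightarrow> finite V \<and> E \<subseteq> V \<times> V \<and> acyclic E \<and>
     Inp \<subseteq> V \<and> Out \<subseteq> V \<and> Inp \<inter> Out = {} \<and>
     (\<forall>(a, b) \<in> E. b \<notin> Inp \<and> a \<notin> Out)"

definition hidden :: "'v set \<Rightarrow> 'v set \<Rightarrow> 'v set \<Rightarrow> 'v set" where
  "hidden V Inp Out = V - Inp - Out"

definition params :: "'v set \<Rightarrow> ('v \<times> 'v) set \<Rightarrow> 'v set \<Rightarrow> 'v param set" where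
  "params V E Inp = W ` E \<union> Bias ` (V - Inp)"

definition in_set :: "('v \<times> 'v) set \<Rightarrow> 'v \<Rightarrow> 'v param set" where
  "in_set E h = insert (Bias h) (W ` {e \<in> E. snd e = h})"

definition out_set :: "('v \<times> 'v) set \<Rightarrow> 'v \<Rightarrow> 'v param set" where
  "out_set E h = W ` {e \<in> E. fst e = h}"

definition Bmat :: "('v \<times> 'v) set \<Rightarrow> 'v param \<Rightarrow> 'v \<Rightarrow> real" where
  "Bmat E i h = (if i \<in> in_set E h then -1 else if i \<in> out_set E h then 1 else 0)"

definition Bmul :: "('v \<times> 'v) set \<Rightarrow> 'v set \<Rightarrow> ('v \<Rightarrow> real) \<Rightarrow> 'v param \<Rightarrow> real" where
  "Bmul E H u i = (\<Sum>h\<in>H. Bmat E i h * u h)"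

definition paths :: "'v set \<Rightarrow> ('v \<times> 'v) set \<Rightarrow> 'v set \<Rightarrow> 'v set \<Rightarrow> 'v list set" where
  "paths V E Inp Out = {xs. xs \<noteq> [] \<and> set xs \<subseteq> V \<and>
      (\<forall>k. Suc k < length xs \<longrightarrow> (xs ! k, xs ! Suc k) \<in> E) \<and>
      last xs \<in> Out \<and> (length xs = 1 \<longrightarrow> hd xs \<notin> Inp)}"

definition path_edges :: "'v list \<Rightarrow> ('v \<times> 'v) list" where
  "path_edges xs = zip xs (tl xs)"

definition path_lift :: "'v set \<Rightarrow> ('v param \<Rightarrow> real) \<Rightarrow> 'v list \<Rightarrow> real" where
  "path_lift Inp \<theta> xs =
     prod_list (map (\<lambda>e. \<theta> (W e)) (path_edges xs)) *
     (if hd xs \<in> Inp then 1 else \<theta> (Bias (hd xs)))"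

definition jac :: "'v set \<Rightarrow> ('v param \<Rightarrow> real) \<Rightarrow> 'v list \<Rightarrow> 'v param \<Rightarrow> real" where
  "jac Inp \<theta> xs i = deriv (\<lambda>t. path_lift Inp (\<theta>(i := t)) xs) (\<theta> i)"

definition gram :: "'v set \<Rightarrow> ('v \<times> 'v) set \<Rightarrow> 'v set \<Rightarrow> 'v set \<Rightarrow> ('v param \<Rightarrow> real)
    \<Rightarrow> 'v param \<Rightarrow> 'v param \<Rightarrow> real" where
  "gram V E Inp Out \<theta> i j = (\<Sum>xs\<in>paths V E Inp Out. jac Inp \<theta> xs i * jac Inp \<theta> xs j)"

definition rescale_obj :: "'v set \<Rightarrow> ('v \<times> 'v) set \<Rightarrow> 'v set \<Rightarrow> 'v set \<Rightarrow> ('v param \<Rightarrow> real)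
    \<Rightarrow> ('v \<Rightarrow> real) \<Rightarrow> real" where
  "rescale_obj V E Inp Out \<theta> u =
     real (card (params V E Inp)) *
       ln (\<Sum>i\<in>params V E Inp. exp (Bmul E (hidden V Inp Out) u i) * gram V E Inp Out \<theta> i i)
     - (\<Sum>i\<in>params V E Inp. Bmul E (hidden V Inp Out) u i)"

definition vecs_on :: "'v set \<Rightarrow> ('v \<Rightarrow> real) set" where
  "vecs_on H = {u. \<forall>v. v \<notin> H \<longrightarrow> u v = 0}"

end

theory Submission
  imports Defs
begin

text \<open>With \<open>x = B u\<close> and all \<open>G\<^sub>i\<^sub>i = \<alpha>\<close>, the objective is \<open>p ln (\<alpha> \<Sum>\<^sub>i exp x\<^sub>i) - \<Sum>\<^sub>i x\<^sub>i\<close>.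
  Summing the tangent-line bounds of \<open>exp\<close> at the mean \<open>m\<close> of the \<open>x\<^sub>i\<close> gives
  \<open>\<Sum>\<^sub>i exp x\<^sub>i \<ge> p exp m\<close>, so the objective is at least \<open>p ln (p \<alpha>)\<close>, its value at \<open>u = 0\<close>,
  with equality only if \<open>B u\<close> is constant. The bias of an output neuron is a zero
  coordinate of \<open>B u\<close> and the bias of a hidden neuron \<open>h\<close> is the coordinate \<open>-u\<^sub>h\<close>, so a
  constant \<open>B u\<close> forces \<open>u = 0\<close>. An output neuron exists because \<open>G \<noteq> 0\<close> is a sum over
  paths ending in outputs.\<close>

lemma exp_ge_tangent: "exp m * (1 + (y - m)) \<le> exp (y::real)"
  using exp_ge_add_one_self[of "y - m"] by (simp add: exp_diff field_simps)

lemma exp_gt_tangent: "y \<noteq> m \<Longrightarrow> exp m * (1 + (y - m)) < exp (y::real)"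
  using exp_minus_greater[of "m - y"] by (simp add: exp_diff field_simps)

lemma sum_tangent_exp_mean:
  fixes x :: "'a \<Rightarrow> real"
  assumes "finite P"
  defines "m \<equiv> (\<Sum>i\<in>P. x i) / card P"
  shows "(\<Sum>i\<in>P. exp m * (1 + (x i - m))) = card P * exp m"
proof -
  have "(\<Sum>i\<in>P. exp m * (1 + (x i - m))) = exp m * (card P + (\<Sum>i\<in>P. x i) - card P * m)"
    by (simp add: sum_distrib_left[symmetric] sum.distrib sum_subtractf)
  also have "\<dots> = card P * exp m"
    using assms(1) by (cases "P = {}") (simp_all add: m_def)
  finally show ?thesis .
qed

lemma card_mul_exp_mean_le_sum_exp:
  fixes x :: "'a \<Rightarrow> real"
  assumes "finite P"
  shows "card P * exp ((\<Sum>i\<in>P. x i) / card P) \<le> (\<Sum>i\<in>P. exp (x i))"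
proof -
  let ?m = "(\<Sum>i\<in>P. x i) / card P"
  have "(\<Sum>i\<in>P. exp ?m * (1 + (x i - ?m))) \<le> (\<Sum>i\<in>P. exp (x i))"
    by (intro sum_mono exp_ge_tangent)
  then show ?thesis by (simp only: sum_tangent_exp_mean[OF assms])
qed

lemma card_mul_exp_mean_less_sum_exp:
  fixes x :: "'a \<Rightarrow> real"
  assumes "finite P" and "j \<in> P" and "x j \<noteq> (\<Sum>i\<in>P. x i) / card P"
  shows "card P * exp ((\<Sum>i\<in>P. x i) / card P) < (\<Sum>i\<in>P. exp (x i))"
proof -
  let ?m = "(\<Sum>i\<in>P. x i) / card P"
  have "(\<Sum>i\<in>P. exp ?m * (1 + (x i - ?m))) < (\<Sum>i\<in>P. exp (x i))"
    using assms by (intro sum_strict_mono_ex1) (auto intro: exp_ge_tangent exp_gt_tangent)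
  then show ?thesis by (simp only: sum_tangent_exp_mean[OF assms(1)])
qed

lemma log_sum_exp_minus_sum_lower_bound:
  fixes x :: "'a \<Rightarrow> real" and \<alpha> :: real
  assumes "finite P" and "\<alpha> > 0"
  shows "card P * ln (card P * \<alpha>) \<le> card P * ln (\<Sum>i\<in>P. exp (x i) * \<alpha>) - (\<Sum>i\<in>P. x i)"
    and "card P * ln (\<Sum>i\<in>P. exp (x i) * \<alpha>) - (\<Sum>i\<in>P. x i) \<le> card P * ln (card P * \<alpha>)
           \<Longrightarrow> \<forall>j\<in>P. x j = (\<Sum>i\<in>P. x i) / card P"
proof -
  define n where "n = real (card P)"
  define m where "m = (\<Sum>i\<in>P. x i) / n"
  define S where "S = (\<Sum>i\<in>P. exp (x i))"
  have S_pos: "S > 0" if "P \<noteq> {}"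
    using that assms(1) by (simp add: S_def sum_pos)
  have gap: "n * ln (\<Sum>i\<in>P. exp (x i) * \<alpha>) - (\<Sum>i\<in>P. x i) - n * ln (n * \<alpha>)
               = n * (ln S - ln (n * exp m))" if "P \<noteq> {}"
  proof -
    have "n > 0" using that assms(1) by (simp add: n_def card_gt_0_iff)
    moreover have "(\<Sum>i\<in>P. exp (x i) * \<alpha>) = S * \<alpha>" by (simp add: S_def sum_distrib_right)
    ultimately show ?thesis using S_pos[OF that] assms(2)
      by (simp add: m_def ln_mult field_simps)
  qed
  have mean_le: "n * exp m \<le> S"
    using card_mul_exp_mean_le_sum_exp[OF assms(1)] by (simp add: n_def m_def S_def)
  show "card P * ln (card P * \<alpha>) \<le> card P * ln (\<Sum>i\<in>P. exp (x i) * \<alpha>) - (\<Sum>i\<in>P. x i)"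
  proof (cases "P = {}")
    case False
    then have "0 < n" using assms(1) by (simp add: n_def card_gt_0_iff)
    moreover have "ln (n * exp m) \<le> ln S" using \<open>0 < n\<close> mean_le by (intro ln_mono) auto
    ultimately have "0 \<le> n * (ln S - ln (n * exp m))" by simp
    then show ?thesis using gap[OF False] by (simp add: n_def)
  qed simp
  assume le: "card P * ln (\<Sum>i\<in>P. exp (x i) * \<alpha>) - (\<Sum>i\<in>P. x i) \<le> card P * ln (card P * \<alpha>)"
  show "\<forall>j\<in>P. x j = (\<Sum>i\<in>P. x i) / card P"
  proof (rule ccontr)
    assume "\<not> ?thesis"
    then obtain j where j: "j \<in> P" "x j \<noteq> m" by (auto simp: m_def n_def)
    then have "0 < n" using assms(1) by (auto simp: n_def card_gt_0_iff)
    moreover have "n * exp m < S"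
      using card_mul_exp_mean_less_sum_exp[OF assms(1) j(1)] j(2) by (simp add: n_def m_def S_def)
    ultimately have "0 < n * (ln S - ln (n * exp m))" by (simp add: ln_strict_mono)
    then show False using gap le j(1) by (auto simp: n_def)
  qed
qed

lemma Bmul_zero [simp]: "Bmul E H (\<lambda>_. 0) i = 0"
  by (simp add: Bmul_def)

lemma Bmul_Bias:
  assumes "finite H"
  shows "Bmul E H u (Bias h) = (if h \<in> H then - u h else 0)"
proof -
  have "Bmat E (Bias h) h' * u h' = (if h' = h then - u h else 0)" for h'
    by (auto simp: Bmat_def in_set_def out_set_def)
  then show ?thesis using assms by (simp add: Bmul_def)
qed

lemma output_exists_if_gram_nonzero:
  assumes "gram V E Inp Out \<theta> i j \<noteq> 0"
  obtains out where "out \<in> Out"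
proof -
  from assms obtain xs where "xs \<in> paths V E Inp Out"
    unfolding gram_def by (metis sum.empty ex_in_conv)
  then show ?thesis using that by (auto simp: paths_def)
qed

lemma Bmul_constant_imp_zero:
  assumes "dag_network V E Inp Out" and "out \<in> Out"
    and "u \<in> vecs_on (hidden V Inp Out)"
    and "\<forall>i\<in>params V E Inp. Bmul E (hidden V Inp Out) u i = c"
  shows "u = (\<lambda>_. 0)"
proof
  have net: "finite V" "Out \<subseteq> V" "Inp \<inter> Out = {}"
    using assms(1) by (auto simp: dag_network_def)
  then have "Bias out \<in> params V E Inp" using assms(2) by (auto simp: params_def)
  moreover have "out \<notin> hidden V Inp Out" using assms(2) by (simp add: hidden_def)
  ultimately have "c = 0" using assms(4) Bmul_Bias[of "hidden V Inp Out"] net(1)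
    by (force simp: hidden_def)
  fix v
  show "u v = 0"
  proof (cases "v \<in> hidden V Inp Out")
    case True
    then have "Bias v \<in> params V E Inp" by (auto simp: params_def hidden_def)
    then show ?thesis using assms(4) Bmul_Bias[of "hidden V Inp Out"] True net(1) \<open>c = 0\<close>
      by (force simp: hidden_def)
  next
    case False
    then show ?thesis using assms(3) by (simp add: vecs_on_def)
  qed
qed

theorem propositionJ1:
  fixes V :: "'v set" and E :: "('v \<times> 'v) set" and Inp Out :: "'v set"
    and \<theta> :: "'v param \<Rightarrow> real" and \<alpha> :: real
  assumes "dag_network V E Inp Out"
    and "\<alpha> > 0"
    and "\<forall>i\<in>params V E Inp. gram V E Inp Out \<theta> i i = \<alpha>"
  shows "{u \<in> vecs_on (hidden V Inp Out).
            \<forall>u' \<in> vecs_on (hidden V Inp Out).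
              rescale_obj V E Inp Out \<theta> u \<le> rescale_obj V E Inp Out \<theta> u'} = {(\<lambda>_. 0)}
         \<and> (\<forall>i\<in>params V E Inp. \<forall>j\<in>params V E Inp.
              (if i = j then exp (Bmul E (hidden V Inp Out) (\<lambda>_. 0) i) else 0)
              = (if i = j then 1 else (0::real)))"
proof -
  define H where "H = hidden V Inp Out"
  define P where "P = params V E Inp"
  define F where "F = rescale_obj V E Inp Out \<theta>"
  have "finite V" "E \<subseteq> V \<times> V" using assms(1) by (auto simp: dag_network_def)
  then have finP: "finite P" by (auto simp: P_def params_def dest: finite_subset)
  have F_eq: "F u = card P * ln (\<Sum>i\<in>P. exp (Bmul E H u i) * \<alpha>) - (\<Sum>i\<in>P. Bmul E H u i)" for u
    using assms(3) by (simp add: F_def rescale_obj_def H_def P_def)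
  have F_ge: "F (\<lambda>_. 0) \<le> F u" for u
    using log_sum_exp_minus_sum_lower_bound(1)[OF finP assms(2)] by (simp add: F_eq)
  have unique: "u = (\<lambda>_. 0)" if "u \<in> vecs_on H" and "F u \<le> F (\<lambda>_. 0)" for u
  proof (cases "H = {}")
    case True
    then show ?thesis using that(1) by (auto simp: vecs_on_def)
  next
    case False
    then obtain h where "h \<in> H" by blast
    then have "gram V E Inp Out \<theta> (Bias h) (Bias h) = \<alpha>"
      using assms(3) by (auto simp: H_def hidden_def params_def)
    then obtain out where out: "out \<in> Out"
      using assms(2) output_exists_if_gram_nonzero by (metis less_irrefl)
    have "\<forall>j\<in>P. Bmul E H u j = (\<Sum>i\<in>P. Bmul E H u i) / card P"
      using log_sum_exp_minus_sum_lower_bound(2)[OF finP assms(2)] that(2) by (simp add: F_eq)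
    then show ?thesis
      using Bmul_constant_imp_zero[OF assms(1) out] that(1) unfolding H_def P_def by blast
  qed
  have "(\<lambda>_. 0) \<in> vecs_on H" by (simp add: vecs_on_def)
  then show ?thesis using F_ge unique unfolding F_def H_def P_def by auto
qed

end
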